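(* Let $\lambda>0$ and $p\in\left(\frac{2\lambda+1}{2\lambda+2},1\right]$. There is a constant $C>0$ depending only on $\lambda$ and $p$ such that the following holds. Let $f$ be a measurable function on $\mathbb{R}_+$ such that (i) $\int_0^\infty f(x)x^{2\lambda}dx=0$; (ii) there exist $x_1,x_2,r\in\mathbb{R}_+$ and $C_1,C_2>0$ with $|f(x)|\le C_1\chi_{I(x_1,r)}(x)+C_2\chi_{I(x_2,r)}(x)$ for all $x\in\mathbb{R}_+$; (iii) $|x_1-x_2|\ge 4r$. Then $f\in H^p(\mathbb{R}_+,dm_\lambda)$ and $$\|f\|_{H^p(\mathbb{R}_+,dm_\lambda)}^p\le C\left(\frac{|x_1-x_2|}{r}\right)^{1-p}\log_2\!\left(\frac{|x_1-x_2|}{r}\right)\Big[C_1^p\,m_\lambda(I(x_1,r))+C_2^p\,m_\lambda(I(x_2,r))\Big].$$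
   Context: Fix $\lambda>0$. $\mathbb{R}_+=(0,\infty)$, $dm_\lambda(x)=x^{2\lambda}dx$, and $I(x,s)=(x-s,x+s)\cap\mathbb{R}_+$ for $x,s>0$; $\chi_E$ is the indicator of $E$. For $p\in\left(\frac{2\lambda+1}{2\lambda+2},1\right]$, a $p$-atom is a function $a$ supported in an open bounded interval $I\subset\mathbb{R}_+$ with $\|a\|_{L^\infty}\le m_\lambda(I)^{-1/p}$ and $\int_0^\infty a\,dm_\lambda=0$. The Hardy space $H^p(\mathbb{R}_+,dm_\lambda)$ consists of the $f$ that can be written as $f=\sum_k\alpha_ka_k$ (in $L^p(dm_\lambda)$) with $a_k$ $p$-atoms and $\sum_k|\alpha_k|^p<\infty$, with quasi-norm $\|f\|_{H^p(\mathbb{R}_+,dm_\lambda)}\simeq\inf(\sum_k|\alpha_k|^p)^{1/p}$ over all such decompositions. *)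

theory Defs
  imports "HOL-Analysis.Analysis"
begin

definition mlam :: "real \<Rightarrow> real measure" where
  "mlam lam = density lborel (\<lambda>x. ennreal (indicator {0<..} x * x powr (2 * lam)))"

definition Iint :: "real \<Rightarrow> real \<Rightarrow> real set" where
  "Iint x s = {x - s<..<x + s} \<inter> {0<..}"

definition patom :: "real \<Rightarrow> real \<Rightarrow> (real \<Rightarrow> real) \<Rightarrow> bool" where
  "patom lam p a \<longleftrightarrow> a \<in> borel_measurable borel \<and>
     (\<exists>c d. 0 \<le> c \<and> c < d \<and>
        (AE x in mlam lam. x \<notin> {c<..<d} \<longrightarrow> a x = 0) \<and>
        (AE x in mlam lam. \<bar>a x\<bar> \<le> measure (mlam lam) {c<..<d} powr (-1 / p))) \<and>
     integrable (mlam lam) a \<and> integral\<^sup>L (mlam lam) a = 0"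

definition atomic_decomp :: "real \<Rightarrow> real \<Rightarrow> (real \<Rightarrow> real) \<Rightarrow> (nat \<Rightarrow> real)
    \<Rightarrow> (nat \<Rightarrow> real \<Rightarrow> real) \<Rightarrow> bool" where
  "atomic_decomp lam p f \<alpha> a \<longleftrightarrow>
     (\<forall>k. patom lam p (a k)) \<and> summable (\<lambda>k. \<bar>\<alpha> k\<bar> powr p) \<and>
     ((\<lambda>N. \<integral>\<^sup>+ x. ennreal (\<bar>f x - (\<Sum>k<N. \<alpha> k * a k x)\<bar> powr p) \<partial>mlam lam)
        \<longlonglongrightarrow> 0)"

definition in_Hp :: "real \<Rightarrow> real \<Rightarrow> (real \<Rightarrow> real) \<Rightarrow> bool" where
  "in_Hp lam p f \<longleftrightarrow> (\<exists>\<alpha> a. atomic_decomp lam p f \<alpha> a)"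

definition Hp_norm_p :: "real \<Rightarrow> real \<Rightarrow> (real \<Rightarrow> real) \<Rightarrow> real" where
  "Hp_norm_p lam p f = Inf {(\<Sum>k. \<bar>\<alpha> k\<bar> powr p) | \<alpha> a. atomic_decomp lam p f \<alpha> a}"

end

theory Submission
  imports Defs
begin

text \<open>Split \<open>f = f1 + f2\<close> along the two intervals and let \<open>s = \<integral>f1 = -\<integral>f2\<close>. Subtracting
  \<open>s\<close> times the unit-mass bump \<open>\<chi>\<^bsub>I(x1,r)\<^esub> / m\<^sub>\<lambda>(I(x1,r))\<close> from \<open>f1\<close>, and adding the
  corresponding multiple of the bump on \<open>I(x2,r)\<close> to \<open>f2\<close>, leaves two multiples of atoms and a
  transport term: \<open>s\<close> times the difference of the two bumps. That difference telescopes along the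
  dyadic radii \<open>2^k r\<close>, \<open>k < K\<close>, around both centres, plus one bridge between the bumps of radius
  \<open>2^K r \<ge> |x1 - x2|\<close>. By the doubling property of \<open>m\<^sub>\<lambda>\<close> each of these \<open>2K + 1\<close>, i.e. about
  \<open>log\<^sub>2 (|x1 - x2| / r)\<close>, differences is an atom multiple of cost \<open>O(|s|^p m\<^sub>\<lambda>(J)^(1-p))\<close>,
  \<open>J = I(x1, 2^(K+1) r)\<close>; finally \<open>|s| \<le> C2 m\<^sub>\<lambda>(I(x2,r))\<close> and
  \<open>m\<^sub>\<lambda>(J) = O((|x1 - x2| / r) m\<^sub>\<lambda>(I(x2,r)))\<close>.
  The lower bound on \<open>p\<close> enters only through \<open>p > 0\<close>.\<close>

section \<open>The measure \<open>m\<^sub>\<lambda>\<close> on intervals\<close>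

lemma sets_mlam [simp, measurable_cong]: "sets (mlam lam) = sets borel"
  unfolding mlam_def by simp

lemma measurable_mlam_iff: "f \<in> borel_measurable (mlam lam) \<longleftrightarrow> f \<in> borel_measurable borel"
  by (subst measurable_cong_sets[OF sets_mlam refl]) (rule refl)

lemma AE_mlam_pos: "AE x in mlam lam. x > 0"
  unfolding mlam_def by (subst AE_density) (auto simp: indicator_def)

lemma emeasure_mlam: "A \<in> sets borel \<Longrightarrow> emeasure (mlam lam) A =
   (\<integral>\<^sup>+ x. ennreal (indicator {0<..} x * x powr (2 * lam)) * indicator A x \<partial>lborel)"
  unfolding mlam_def by (subst emeasure_density) auto

lemma emeasure_mlam_interval_le:
  assumes "0 \<le> lam" "0 \<le> a" "a < b"
  shows "emeasure (mlam lam) {a<..<b} \<le> ennreal ((b - a) * b powr (2 * lam))"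
proof -
  have "emeasure (mlam lam) {a<..<b} =
    (\<integral>\<^sup>+ x. ennreal (indicator {0<..} x * x powr (2 * lam)) * indicator {a<..<b} x \<partial>lborel)"
    by (rule emeasure_mlam) simp
  also have "\<dots> \<le> (\<integral>\<^sup>+ x. ennreal (b powr (2 * lam)) * indicator {a<..<b} x \<partial>lborel)"
  proof (rule nn_integral_mono)
    fix x :: real
    show "ennreal (indicator {0<..} x * x powr (2 * lam)) * indicator {a<..<b} x
         \<le> ennreal (b powr (2 * lam)) * indicator {a<..<b} x"
    proof (cases "x \<in> {a<..<b}")
      case True
      then have "x > 0" "x powr (2 * lam) \<le> b powr (2 * lam)"
        using assms by (auto intro!: powr_mono2)
      with True show ?thesis by (auto simp: indicator_def)
    qed (auto simp: indicator_def)
  qed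
  also have "\<dots> = ennreal (b powr (2 * lam)) * ennreal (b - a)"
    by (subst nn_integral_cmult_indicator) (use assms in auto)
  also have "\<dots> = ennreal ((b - a) * b powr (2 * lam))"
    using assms by (simp add: ennreal_mult' mult.commute)
  finally show ?thesis .
qed

lemma emeasure_mlam_interval_ge:
  assumes "0 \<le> lam" "0 \<le> a" "a < b"
  shows "ennreal ((b - a) / 2 * (b / 2) powr (2 * lam)) \<le> emeasure (mlam lam) {a<..<b}"
proof -
  define c where "c = max a (b / 2)"
  have c: "0 < c" "c < b" "b / 2 \<le> c" "(b - a) / 2 \<le> b - c"
    using assms by (auto simp: c_def)
  have "ennreal ((b - a) / 2 * (b / 2) powr (2 * lam)) \<le> ennreal ((b - c) * c powr (2 * lam))"
    using c assms by (intro ennreal_leI mult_mono powr_mono2) auto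
  also have "\<dots> = ennreal (c powr (2 * lam)) * ennreal (b - c)"
    using c by (simp add: ennreal_mult' mult.commute)
  also have "\<dots> = (\<integral>\<^sup>+ x. ennreal (c powr (2 * lam)) * indicator {c<..<b} x \<partial>lborel)"
    by (subst nn_integral_cmult_indicator) (use c in auto)
  also have "\<dots> \<le> (\<integral>\<^sup>+ x. ennreal (indicator {0<..} x * x powr (2 * lam)) * indicator {a<..<b} x \<partial>lborel)"
  proof (rule nn_integral_mono)
    fix x :: real
    show "ennreal (c powr (2 * lam)) * indicator {c<..<b} x \<le>
          ennreal (indicator {0<..} x * x powr (2 * lam)) * indicator {a<..<b} x"
    proof (cases "x \<in> {c<..<b}")
      case True
      then have "x > 0" "x \<in> {a<..<b}" "c powr (2 * lam) \<le> x powr (2 * lam)"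
        using assms c by (auto simp: c_def intro!: powr_mono2)
      with True show ?thesis by (auto simp: indicator_def)
    qed (auto simp: indicator_def)
  qed
  also have "\<dots> = emeasure (mlam lam) {a<..<b}"
    by (rule emeasure_mlam[symmetric]) simp
  finally show ?thesis .
qed

lemma emeasure_mlam_interval_finite:
  assumes "0 \<le> lam" "0 \<le> a" "a < b"
  shows "emeasure (mlam lam) {a<..<b} < top"
  using emeasure_mlam_interval_le[OF assms] ennreal_less_top[of "(b - a) * b powr (2 * lam)"]
  by (rule le_less_trans)

lemma measure_mlam_interval_le:
  assumes "0 \<le> lam" "0 \<le> a" "a < b"
  shows "measure (mlam lam) {a<..<b} \<le> (b - a) * b powr (2 * lam)"
proof -
  have "0 \<le> (b - a) * b powr (2 * lam)" using assms by simp
  then show ?thesis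
    using emeasure_mlam_interval_le[OF assms] emeasure_mlam_interval_finite[OF assms]
    by (simp add: emeasure_eq_ennreal_measure)
qed

lemma measure_mlam_interval_ge:
  assumes "0 \<le> lam" "0 \<le> a" "a < b"
  shows "(b - a) / 2 * (b / 2) powr (2 * lam) \<le> measure (mlam lam) {a<..<b}"
  using emeasure_mlam_interval_ge[OF assms] emeasure_mlam_interval_finite[OF assms]
  by (simp add: emeasure_eq_ennreal_measure)

lemma measure_mlam_interval_pos:
  assumes "0 \<le> lam" "0 \<le> a" "a < b"
  shows "0 < measure (mlam lam) {a<..<b}"
proof -
  have "0 < (b - a) / 2 * (b / 2) powr (2 * lam)" using assms by auto
  with measure_mlam_interval_ge[OF assms] show ?thesis by linarith
qed

lemma integrable_mlam_bounded_by_indicator: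
  fixes g :: "real \<Rightarrow> real"
  assumes "g \<in> borel_measurable borel" "S \<in> sets borel" "emeasure (mlam lam) S < top"
    and "\<And>x. \<bar>g x\<bar> \<le> B * indicator S x"
  shows "integrable (mlam lam) g"
proof (rule Bochner_Integration.integrable_bound)
  show "integrable (mlam lam) (\<lambda>x. B * indicator S x)"
    using assms by (simp add: less_top)
  show "g \<in> borel_measurable (mlam lam)"
    using assms(1) by (simp add: measurable_mlam_iff)
  show "AE x in mlam lam. norm (g x) \<le> norm (B * indicator S x)"
    using assms(4) by (intro AE_I2) (auto intro: order_trans[OF _ abs_ge_self])
qed

lemma Iint_eq_interval: "x > 0 \<Longrightarrow> r > 0 \<Longrightarrow> Iint x r = {max 0 (x - r)<..<x + r}"
  unfolding Iint_def by auto

lemma sets_Iint [measurable]: "Iint x r \<in> sets borel"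
  unfolding Iint_def by measurable

lemma Iint_subset: "x - r \<le> y - s \<Longrightarrow> y + s \<le> x + r \<Longrightarrow> Iint y s \<subseteq> Iint x r"
  unfolding Iint_def by auto

lemma Iint_subset_pos: "Iint x r \<subseteq> {0<..}"
  unfolding Iint_def by auto

lemma emeasure_mlam_Iint_finite:
  "0 \<le> lam \<Longrightarrow> x > 0 \<Longrightarrow> r > 0 \<Longrightarrow> emeasure (mlam lam) (Iint x r) < top"
  by (subst Iint_eq_interval) (auto intro!: emeasure_mlam_interval_finite)

lemma measure_mlam_Iint_pos:
  "0 \<le> lam \<Longrightarrow> x > 0 \<Longrightarrow> r > 0 \<Longrightarrow> 0 < measure (mlam lam) (Iint x r)"
  by (simp add: Iint_eq_interval measure_mlam_interval_pos)

lemma measure_mlam_Iint_mono: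
  "0 \<le> lam \<Longrightarrow> x > 0 \<Longrightarrow> r > 0 \<Longrightarrow> Iint y s \<subseteq> Iint x r \<Longrightarrow>
   measure (mlam lam) (Iint y s) \<le> measure (mlam lam) (Iint x r)"
  by (rule measure_mono_fmeasurable)
     (auto simp: fmeasurable_def intro!: emeasure_mlam_Iint_finite)

lemma measure_mlam_Iint_ge:
  assumes "0 \<le> lam" "x > 0" "r > 0"
  shows "r / 2 * ((x + r) / 2) powr (2 * lam) \<le> measure (mlam lam) (Iint x r)"
proof -
  have "r / 2 * ((x + r) / 2) powr (2 * lam) \<le> (x + r - max 0 (x - r)) / 2 * ((x + r) / 2) powr (2 * lam)"
    using assms by (intro mult_right_mono) auto
  also have "\<dots> \<le> measure (mlam lam) {max 0 (x - r)<..<x + r}"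
    using assms by (intro measure_mlam_interval_ge) auto
  also have "\<dots> = measure (mlam lam) (Iint x r)"
    using assms by (simp add: Iint_eq_interval)
  finally show ?thesis .
qed

lemma measure_mlam_Iint_le:
  assumes "0 \<le> lam" "x > 0" "r > 0"
  shows "measure (mlam lam) (Iint x r) \<le> 2 * r * (x + r) powr (2 * lam)"
proof -
  have "measure (mlam lam) (Iint x r) \<le> (x + r - max 0 (x - r)) * (x + r) powr (2 * lam)"
    using assms by (simp add: Iint_eq_interval measure_mlam_interval_le)
  also have "\<dots> \<le> 2 * r * (x + r) powr (2 * lam)"
    by (intro mult_right_mono) auto
  finally show ?thesis .
qed

lemma measure_mlam_Iint_doubling:
  assumes "0 \<le> lam" "x > 0" "r > 0" "y > 0" "s > 0" "s \<le> 2 * r" "y + s \<le> 3 * (x + r)"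
  shows "measure (mlam lam) (Iint y s) \<le> 8 * 6 powr (2 * lam) * measure (mlam lam) (Iint x r)"
proof -
  let ?e = "2 * lam"
  have "measure (mlam lam) (Iint y s) \<le> 2 * s * (y + s) powr ?e"
    using assms by (intro measure_mlam_Iint_le)
  also have "\<dots> \<le> 2 * (2 * r) * (3 * (x + r)) powr ?e"
    using assms by (intro mult_mono powr_mono2) auto
  also have "\<dots> = 8 * 6 powr ?e * (r / 2 * ((x + r) / 2) powr ?e)"
  proof -
    have "6 powr ?e = 3 powr ?e * 2 powr ?e" using powr_mult[of 3 2 ?e] by simp
    moreover have "(3 * (x + r)) powr ?e = 3 powr ?e * (x + r) powr ?e"
      using assms by (intro powr_mult)
    moreover have "((x + r) / 2) powr ?e = (x + r) powr ?e / 2 powr ?e"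
      using assms by (simp add: powr_divide)
    ultimately show ?thesis by (simp add: field_simps)
  qed
  also have "\<dots> \<le> 8 * 6 powr ?e * measure (mlam lam) (Iint x r)"
    using assms by (intro mult_left_mono measure_mlam_Iint_ge) auto
  finally show ?thesis .
qed

lemma measure_mlam_Iint_far:
  assumes "0 \<le> lam" "x1 > 0" "r > 0" "x1 < x2" "s > 0" "s \<le> 4 * (x2 - x1)"
  shows "measure (mlam lam) (Iint x1 s)
    \<le> 16 * 10 powr (2 * lam) * ((x2 - x1) / r) * measure (mlam lam) (Iint x2 r)"
proof -
  let ?e = "2 * lam"
  have "measure (mlam lam) (Iint x1 s) \<le> 2 * s * (x1 + s) powr ?e"
    using assms by (intro measure_mlam_Iint_le)
  also have "\<dots> \<le> 2 * (4 * (x2 - x1)) * (5 * x2) powr ?e"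
    using assms by (intro mult_mono powr_mono2) auto
  also have "\<dots> = 16 * 10 powr ?e * ((x2 - x1) / r) * (r / 2 * (x2 / 2) powr ?e)"
  proof -
    have e1: "10 powr ?e = 5 powr ?e * 2 powr ?e" using powr_mult[of 5 2 ?e] by simp
    have e2: "(5 * x2) powr ?e = 5 powr ?e * x2 powr ?e"
      using assms by (intro powr_mult)
    have e3: "(x2 / 2) powr ?e = x2 powr ?e / 2 powr ?e"
      using assms by (simp add: powr_divide)
    show ?thesis using \<open>r > 0\<close> unfolding e1 e2 e3 by (simp add: field_simps)
  qed
  also have "\<dots> \<le> 16 * 10 powr ?e * ((x2 - x1) / r) * (r / 2 * ((x2 + r) / 2) powr ?e)"
    using assms by (intro mult_left_mono powr_mono2) auto
  also have "\<dots> \<le> 16 * 10 powr ?e * ((x2 - x1) / r) * measure (mlam lam) (Iint x2 r)"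
    using assms by (intro mult_left_mono measure_mlam_Iint_ge) auto
  finally show ?thesis .
qed

lemma integrable_abs_integral_mlam_Iint_le:
  fixes h :: "real \<Rightarrow> real"
  assumes lam: "0 \<le> lam" and pos: "z > 0" "c > 0"
    and h: "h \<in> borel_measurable borel" and bound: "\<And>x. \<bar>h x\<bar> \<le> C * indicator (Iint z c) x"
  shows "integrable (mlam lam) h" "\<bar>integral\<^sup>L (mlam lam) h\<bar> \<le> C * measure (mlam lam) (Iint z c)"
proof -
  have finite: "emeasure (mlam lam) (Iint z c) < top"
    using lam pos by (rule emeasure_mlam_Iint_finite)
  show integrable: "integrable (mlam lam) h"
    using h finite bound by (rule integrable_mlam_bounded_by_indicator[OF _ sets_Iint])
  have "\<bar>integral\<^sup>L (mlam lam) h\<bar> \<le> (\<integral>x. C * indicator (Iint z c) x \<partial>mlam lam)"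
    using finite by (intro integral_abs_bound_integral integrable bound) (simp add: less_top)
  then show "\<bar>integral\<^sup>L (mlam lam) h\<bar> \<le> C * measure (mlam lam) (Iint z c)"
    by simp
qed

section \<open>Finite atomic decompositions\<close>

lemma patom_zero: "patom lam p (\<lambda>_. 0)"
proof -
  have "AE x in mlam lam. \<bar>0::real\<bar> \<le> measure (mlam lam) {0<..<1} powr (- 1 / p)"
    by simp
  then show ?thesis
    unfolding patom_def by (intro conjI exI[of _ 0] exI[of _ 1]) auto
qed

lemma patom_divide_bound:
  fixes g :: "real \<Rightarrow> real"
  assumes lam: "0 \<le> lam" and p: "p > 0" and g: "g \<in> borel_measurable borel"
    and cd: "0 \<le> c" "c < d" and supp: "\<And>x. x \<notin> {c<..<d} \<Longrightarrow> g x = 0"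
    and bound: "\<And>x. \<bar>g x\<bar> \<le> B" and mean_zero: "integral\<^sup>L (mlam lam) g = 0"
  shows "patom lam p (\<lambda>x. g x / (B * measure (mlam lam) {c<..<d} powr (1 / p)))"
proof -
  define m where "m = measure (mlam lam) {c<..<d}"
  define \<kappa> where "\<kappa> = B * m powr (1 / p)"
  have m: "m > 0" unfolding m_def using lam cd by (rule measure_mlam_interval_pos)
  have integrable: "integrable (mlam lam) g"
  proof (rule integrable_mlam_bounded_by_indicator[OF g _ emeasure_mlam_interval_finite[OF lam cd]])
    show "\<bar>g x\<bar> \<le> B * indicator {c<..<d} x" for x
      using bound[of x] supp[of x] by (cases "x \<in> {c<..<d}") auto
  qed simp
  have "\<bar>g x / \<kappa>\<bar> \<le> m powr (-1 / p)" for x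
  proof (cases "\<kappa> = 0")
    case False
    with bound[of 0] have "B > 0" unfolding \<kappa>_def by force
    with m have "\<kappa> > 0" unfolding \<kappa>_def by simp
    then have "\<bar>g x / \<kappa>\<bar> \<le> B / \<kappa>" using bound[of x] by (simp add: divide_right_mono)
    also have "\<dots> = m powr (-1 / p)" unfolding \<kappa>_def using \<open>B > 0\<close> m
      by (simp add: powr_minus_divide divide_simps)
    finally show ?thesis .
  qed simp
  then have "AE x in mlam lam. \<bar>g x / \<kappa>\<bar> \<le> measure (mlam lam) {c<..<d} powr (-1 / p)"
    by (simp add: m_def)
  moreover have "AE x in mlam lam. x \<notin> {c<..<d} \<longrightarrow> g x / \<kappa> = 0"
    using supp by simp
  ultimately have support: "\<exists>c d. 0 \<le> c \<and> c < d \<and>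
      (AE x in mlam lam. x \<notin> {c<..<d} \<longrightarrow> g x / \<kappa> = 0) \<and>
      (AE x in mlam lam. \<bar>g x / \<kappa>\<bar> \<le> measure (mlam lam) {c<..<d} powr (-1 / p))"
    using cd by blast
  have "(\<lambda>x. g x / \<kappa>) \<in> borel_measurable borel"
    using g by measurable
  with support integrable mean_zero have "patom lam p (\<lambda>x. g x / \<kappa>)"
    unfolding patom_def by simp
  then show ?thesis unfolding \<kappa>_def m_def .
qed

definition finite_atomic :: "real \<Rightarrow> real \<Rightarrow> (real \<Rightarrow> real) \<Rightarrow> real \<Rightarrow> bool" where
  "finite_atomic lam p f S \<longleftrightarrow> (\<exists>P. (\<forall>(\<alpha>, a)\<in>set P. patom lam p a) \<and>
     (\<forall>x>0. f x = (\<Sum>(\<alpha>, a)\<leftarrow>P. \<alpha> * a x)) \<and> (\<Sum>(\<alpha>, a)\<leftarrow>P. \<bar>\<alpha>\<bar> powr p) \<le> S)"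

lemma finite_atomic_zero: "finite_atomic lam p (\<lambda>_. 0) 0"
  unfolding finite_atomic_def by (auto intro!: exI[of _ "[]"])

lemma finite_atomic_add:
  assumes "finite_atomic lam p f S" "finite_atomic lam p g T"
  shows "finite_atomic lam p (\<lambda>x. f x + g x) (S + T)"
proof -
  obtain P Q where "\<forall>(\<alpha>, a)\<in>set P. patom lam p a" "\<forall>x>0. f x = (\<Sum>(\<alpha>, a)\<leftarrow>P. \<alpha> * a x)"
      "(\<Sum>(\<alpha>, a)\<leftarrow>P. \<bar>\<alpha>\<bar> powr p) \<le> S"
    and "\<forall>(\<alpha>, a)\<in>set Q. patom lam p a" "\<forall>x>0. g x = (\<Sum>(\<alpha>, a)\<leftarrow>Q. \<alpha> * a x)"
      "(\<Sum>(\<alpha>, a)\<leftarrow>Q. \<bar>\<alpha>\<bar> powr p) \<le> T"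
    using assms unfolding finite_atomic_def by blast
  then show ?thesis
    unfolding finite_atomic_def by (intro exI[of _ "P @ Q"]) auto
qed

lemma finite_atomic_weaken:
  assumes "finite_atomic lam p f S" "S \<le> T" "\<And>x. x > 0 \<Longrightarrow> g x = f x"
  shows "finite_atomic lam p g T"
proof -
  obtain P where "\<forall>(\<alpha>, a)\<in>set P. patom lam p a" "\<forall>x>0. f x = (\<Sum>(\<alpha>, a)\<leftarrow>P. \<alpha> * a x)"
      "(\<Sum>(\<alpha>, a)\<leftarrow>P. \<bar>\<alpha>\<bar> powr p) \<le> S"
    using assms(1) unfolding finite_atomic_def by blast
  with assms(2,3) show ?thesis
    unfolding finite_atomic_def by (intro exI[of _ P]) auto
qed

lemma Hp_norm_p_le_atomic_decomp:
  assumes "atomic_decomp lam p f \<alpha> a"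
  shows "in_Hp lam p f \<and> Hp_norm_p lam p f \<le> (\<Sum>k. \<bar>\<alpha> k\<bar> powr p)"
proof -
  have "Hp_norm_p lam p f \<le> (\<Sum>k. \<bar>\<alpha> k\<bar> powr p)"
    unfolding Hp_norm_p_def
  proof (rule cInf_lower)
    show "bdd_below {\<Sum>k. \<bar>\<alpha> k\<bar> powr p |\<alpha> a. atomic_decomp lam p f \<alpha> a}"
      by (rule bdd_belowI[of _ 0]) (auto simp: atomic_decomp_def intro!: suminf_nonneg)
  qed (use assms in blast)
  with assms show ?thesis
    unfolding in_Hp_def by auto
qed

lemma in_Hp_if_finite_atomic:
  assumes "finite_atomic lam p f S"
  shows "in_Hp lam p f \<and> Hp_norm_p lam p f \<le> S"
proof -
  obtain P where atoms: "\<forall>(\<alpha>, a)\<in>set P. patom lam p a"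
    and f_eq: "\<forall>x>0. f x = (\<Sum>(\<alpha>, a)\<leftarrow>P. \<alpha> * a x)" and cost: "(\<Sum>(\<alpha>, a)\<leftarrow>P. \<bar>\<alpha>\<bar> powr p) \<le> S"
    using assms unfolding finite_atomic_def by blast
  define n where "n = length P"
  define \<alpha> where "\<alpha> j = (if j < n then fst (P ! j) else 0)" for j
  define a where "a j = (if j < n then snd (P ! j) else (\<lambda>_. 0))" for j
  have sum_eq: "(\<Sum>j<N. h (\<alpha> j) (a j)) = (\<Sum>(\<alpha>, a)\<leftarrow>P. h \<alpha> a)"
    if "n \<le> N" "h 0 (\<lambda>_. 0) = 0" for N and h :: "real \<Rightarrow> (real \<Rightarrow> real) \<Rightarrow> real"
  proof -
    have "(\<Sum>j<N. h (\<alpha> j) (a j)) = (\<Sum>j<length P. (\<lambda>(\<alpha>, a). h \<alpha> a) (P ! j))"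
      using that by (subst sum.mono_neutral_right[of "{..<N}" "{..<n}"])
        (auto simp: \<alpha>_def a_def n_def case_prod_beta)
    then show ?thesis
      by (simp add: sum_list_sum_nth atLeast0LessThan)
  qed
  have "patom lam p (a j)" for j
    using atoms nth_mem[of j P] by (cases "j < n") (auto simp: a_def n_def patom_zero case_prod_beta)
  moreover have "summable (\<lambda>j. \<bar>\<alpha> j\<bar> powr p)"
    by (rule summable_finite[of "{..<n}"]) (auto simp: \<alpha>_def)
  moreover have "(\<lambda>N. \<integral>\<^sup>+ x. ennreal (\<bar>f x - (\<Sum>j<N. \<alpha> j * a j x)\<bar> powr p) \<partial>mlam lam) \<longlonglongrightarrow> 0"
  proof (rule tendsto_eventually, rule eventually_sequentiallyI)
    fix N assume "n \<le> N"
    have "AE x in mlam lam. ennreal (\<bar>f x - (\<Sum>j<N. \<alpha> j * a j x)\<bar> powr p) = 0"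
      using AE_mlam_pos
      by eventually_elim (simp add: f_eq sum_eq[OF \<open>n \<le> N\<close>, where h="\<lambda>\<alpha> a. \<alpha> * a _"])
    then have "(\<integral>\<^sup>+ x. ennreal (\<bar>f x - (\<Sum>j<N. \<alpha> j * a j x)\<bar> powr p) \<partial>mlam lam)
        = (\<integral>\<^sup>+ x. 0 \<partial>mlam lam)"
      by (rule nn_integral_cong_AE)
    then show "(\<integral>\<^sup>+ x. ennreal (\<bar>f x - (\<Sum>j<N. \<alpha> j * a j x)\<bar> powr p) \<partial>mlam lam) = 0"
      by simp
  qed
  ultimately have "atomic_decomp lam p f \<alpha> a"
    unfolding atomic_decomp_def by blast
  moreover have "(\<Sum>j. \<bar>\<alpha> j\<bar> powr p) = (\<Sum>j<n. \<bar>\<alpha> j\<bar> powr p)"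
    by (rule suminf_finite) (auto simp: \<alpha>_def)
  ultimately show ?thesis
    using Hp_norm_p_le_atomic_decomp cost sum_eq[of n "\<lambda>\<alpha> a. \<bar>\<alpha>\<bar> powr p"] by fastforce
qed

lemma finite_atomic_bounded_mean_zero:
  fixes g :: "real \<Rightarrow> real"
  assumes lam: "0 \<le> lam" and p: "p > 0" and zc: "z > 0" "c > 0"
    and g: "g \<in> borel_measurable borel" and supp: "\<And>x. x \<notin> Iint z c \<Longrightarrow> g x = 0"
    and bound: "\<And>x. \<bar>g x\<bar> \<le> B" and mean_zero: "integral\<^sup>L (mlam lam) g = 0"
  shows "finite_atomic lam p g (B powr p * measure (mlam lam) (Iint z c))"
proof -
  define m where "m = measure (mlam lam) (Iint z c)"
  define \<alpha> where "\<alpha> = B * m powr (1 / p)"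
  have m: "m > 0" unfolding m_def using lam zc by (rule measure_mlam_Iint_pos)
  have B: "B \<ge> 0" using bound[of 0] by linarith
  have "patom lam p (\<lambda>x. g x / \<alpha>)"
    unfolding \<alpha>_def m_def using patom_divide_bound[OF lam p g _ _ _ bound mean_zero] zc supp
    by (simp add: Iint_eq_interval)
  moreover have "\<alpha> * (g x / \<alpha>) = g x" for x
    using bound[of x] m unfolding \<alpha>_def by (cases "B = 0") auto
  moreover have "\<bar>\<alpha>\<bar> powr p = B powr p * m"
    unfolding \<alpha>_def using m B p by (simp add: powr_mult powr_powr)
  ultimately show ?thesis
    unfolding finite_atomic_def m_def by (intro exI[of _ "[(\<alpha>, \<lambda>x. g x / \<alpha>)]"]) auto
qed

definition unit_bump :: "real \<Rightarrow> real \<Rightarrow> real \<Rightarrow> real \<Rightarrow> real" where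
  "unit_bump lam z c x = indicator (Iint z c) x / measure (mlam lam) (Iint z c)"

lemma borel_measurable_unit_bump [measurable]: "unit_bump lam z c \<in> borel_measurable borel"
  unfolding unit_bump_def by measurable

lemma unit_bump_eq_0: "x \<notin> Iint z c \<Longrightarrow> unit_bump lam z c x = 0"
  unfolding unit_bump_def by simp

lemma unit_bump_bounds:
  assumes "0 \<le> lam" "z > 0" "c > 0"
  shows "0 \<le> unit_bump lam z c x" "unit_bump lam z c x \<le> 1 / measure (mlam lam) (Iint z c)"
  using measure_mlam_Iint_pos[OF assms] by (auto simp: unit_bump_def indicator_def)

lemma integrable_unit_bump:
  assumes "0 \<le> lam" "z > 0" "c > 0"
  shows "integrable (mlam lam) (unit_bump lam z c)"
proof -
  have "integrable (mlam lam) (indicator (Iint z c) :: real \<Rightarrow> real)"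
    using emeasure_mlam_Iint_finite[OF assms] by (intro integrable_real_indicator) (auto simp: less_top)
  then show ?thesis unfolding unit_bump_def by simp
qed

lemma integral_unit_bump:
  assumes "0 \<le> lam" "z > 0" "c > 0"
  shows "integral\<^sup>L (mlam lam) (unit_bump lam z c) = 1"
  unfolding unit_bump_def using measure_mlam_Iint_pos[OF assms] by simp

lemma transport_cost_le:
  fixes s mU mV mW M Q p :: real
  assumes "0 < p" "p \<le> 1" "Q \<ge> 1" "mU > 0" "mV > 0" "mW > 0"
    and "mW \<le> Q * mU" "mW \<le> Q * mV" "mW \<le> M"
  shows "(\<bar>s\<bar> * (1 / mU + 1 / mV)) powr p * mW \<le> 2 * Q * (\<bar>s\<bar> powr p * M powr (1 - p))"
proof -
  have "1 / mU \<le> Q / mW" "1 / mV \<le> Q / mW" using assms by (auto simp: field_simps)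
  then have "(\<bar>s\<bar> * (1 / mU + 1 / mV)) powr p \<le> (\<bar>s\<bar> * (2 * Q / mW)) powr p"
    using assms by (intro powr_mono2 mult_left_mono) auto
  also have "\<dots> = (2 * Q) powr p * \<bar>s\<bar> powr p / mW powr p"
    using assms by (simp add: powr_mult powr_divide)
  finally have "(\<bar>s\<bar> * (1 / mU + 1 / mV)) powr p * mW \<le> (2 * Q) powr p * \<bar>s\<bar> powr p / mW powr p * mW"
    using assms by (intro mult_right_mono) auto
  also have "\<dots> = (2 * Q) powr p * (\<bar>s\<bar> powr p * mW powr (1 - p))"
    using assms by (simp add: powr_diff)
  also have "\<dots> \<le> 2 * Q * (\<bar>s\<bar> powr p * M powr (1 - p))"
  proof (intro mult_mono mult_left_mono powr_mono2)
    show "(2 * Q) powr p \<le> 2 * Q"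
      using assms powr_mono[of p 1 "2 * Q"] by simp
  qed (use assms in auto)
  finally show ?thesis .
qed

lemma finite_atomic_transport:
  assumes lam: "0 \<le> lam" and p: "0 < p" "p \<le> 1" and Q: "Q \<ge> 1"
    and pos: "z1 > 0" "a > 0" "z2 > 0" "b > 0" "z > 0" "c > 0"
    and sub: "Iint z1 a \<subseteq> Iint z c" "Iint z2 b \<subseteq> Iint z c"
    and doubling: "measure (mlam lam) (Iint z c) \<le> Q * measure (mlam lam) (Iint z1 a)"
      "measure (mlam lam) (Iint z c) \<le> Q * measure (mlam lam) (Iint z2 b)"
    and M: "measure (mlam lam) (Iint z c) \<le> M"
  shows "finite_atomic lam p (\<lambda>x. s * (unit_bump lam z1 a x - unit_bump lam z2 b x))
    (2 * Q * (\<bar>s\<bar> powr p * M powr (1 - p)))"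
proof -
  define B where "B = \<bar>s\<bar> * (1 / measure (mlam lam) (Iint z1 a) + 1 / measure (mlam lam) (Iint z2 b))"
  have "finite_atomic lam p (\<lambda>x. s * (unit_bump lam z1 a x - unit_bump lam z2 b x))
      (B powr p * measure (mlam lam) (Iint z c))"
  proof (rule finite_atomic_bounded_mean_zero[OF lam p(1) pos(5,6)])
    show "(\<lambda>x. s * (unit_bump lam z1 a x - unit_bump lam z2 b x)) \<in> borel_measurable borel"
      by measurable
    show "s * (unit_bump lam z1 a x - unit_bump lam z2 b x) = 0" if "x \<notin> Iint z c" for x
    proof -
      have "x \<notin> Iint z1 a" "x \<notin> Iint z2 b" using that sub by auto
      then show ?thesis by (simp add: unit_bump_eq_0)
    qed
    show "\<bar>s * (unit_bump lam z1 a x - unit_bump lam z2 b x)\<bar> \<le> B" for x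
      using unit_bump_bounds[OF lam pos(1,2), of x] unit_bump_bounds[OF lam pos(3,4), of x]
      unfolding B_def abs_mult by (intro mult_left_mono) auto
    show "(\<integral>x. s * (unit_bump lam z1 a x - unit_bump lam z2 b x) \<partial>mlam lam) = 0"
      using integrable_unit_bump[OF lam pos(1,2)] integrable_unit_bump[OF lam pos(3,4)]
        integral_unit_bump[OF lam pos(1,2)] integral_unit_bump[OF lam pos(3,4)] by simp
  qed
  moreover have "B powr p * measure (mlam lam) (Iint z c) \<le> 2 * Q * (\<bar>s\<bar> powr p * M powr (1 - p))"
    unfolding B_def using p Q doubling M lam pos
    by (intro transport_cost_le) (auto intro: measure_mlam_Iint_pos)
  ultimately show ?thesis
    by (rule finite_atomic_weaken) simp
qed

lemma finite_atomic_subtract_mean: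
  fixes h :: "real \<Rightarrow> real"
  assumes lam: "0 \<le> lam" and p: "0 < p" "p \<le> 1" and pos: "z > 0" "c > 0"
    and h: "h \<in> borel_measurable borel" and bound: "\<And>x. \<bar>h x\<bar> \<le> C * indicator (Iint z c) x"
  shows "finite_atomic lam p (\<lambda>x. h x - integral\<^sup>L (mlam lam) h * unit_bump lam z c x)
    (2 * (C powr p * measure (mlam lam) (Iint z c)))"
proof -
  define m where "m = measure (mlam lam) (Iint z c)"
  have m: "m > 0" unfolding m_def using lam pos by (rule measure_mlam_Iint_pos)
  have C: "C \<ge> 0" using bound[of z] pos by (simp add: Iint_def)
  note integrable = integrable_abs_integral_mlam_Iint_le(1)[OF lam pos h bound]
  have "\<bar>integral\<^sup>L (mlam lam) h\<bar> \<le> C * m"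
    unfolding m_def using lam pos h bound by (rule integrable_abs_integral_mlam_Iint_le(2))
  then have "\<bar>integral\<^sup>L (mlam lam) h * unit_bump lam z c x\<bar> \<le> C * m * (1 / m)" for x
    using unit_bump_bounds[OF lam pos, of x] unfolding abs_mult m_def
    by (intro mult_mono) auto
  then have mean_bound: "\<bar>integral\<^sup>L (mlam lam) h * unit_bump lam z c x\<bar> \<le> C" for x
    using m by simp
  have "finite_atomic lam p (\<lambda>x. h x - integral\<^sup>L (mlam lam) h * unit_bump lam z c x) ((2 * C) powr p * m)"
    unfolding m_def
  proof (rule finite_atomic_bounded_mean_zero[OF lam p(1) pos])
    show "(\<lambda>x. h x - integral\<^sup>L (mlam lam) h * unit_bump lam z c x) \<in> borel_measurable borel"
      using h by measurable
    show "h x - integral\<^sup>L (mlam lam) h * unit_bump lam z c x = 0" if "x \<notin> Iint z c" for x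
      using bound[of x] that by (simp add: unit_bump_eq_0)
    show "\<bar>h x - integral\<^sup>L (mlam lam) h * unit_bump lam z c x\<bar> \<le> 2 * C" for x
      using bound[of x] mean_bound[of x] C by (cases "x \<in> Iint z c") auto
    show "(\<integral>x. h x - integral\<^sup>L (mlam lam) h * unit_bump lam z c x \<partial>mlam lam) = 0"
      using integrable integrable_unit_bump[OF lam pos] integral_unit_bump[OF lam pos] by simp
  qed
  moreover have "(2 * C) powr p * m \<le> 2 * (C powr p * m)"
  proof -
    have "(2 * C) powr p = 2 powr p * C powr p" using C by (simp add: powr_mult)
    moreover have "2 powr p \<le> (2::real)" using p powr_mono[of p 1 2] by simp
    ultimately show ?thesis using m by (simp add: mult.assoc mult_right_mono)
  qed
  ultimately show ?thesis
    unfolding m_def[symmetric] by (rule finite_atomic_weaken) simp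
qed

section \<open>Two separated bumps\<close>

lemma finite_atomic_dyadic_chain:
  assumes lam: "0 \<le> lam" and p: "0 < p" "p \<le> 1" and pos: "z > 0" "r > 0"
    and M: "measure (mlam lam) (Iint z (r * 2 ^ K)) \<le> M"
  shows "finite_atomic lam p (\<lambda>x. s * (unit_bump lam z r x - unit_bump lam z (r * 2 ^ K) x))
    (real K * (2 * (8 * 6 powr (2 * lam)) * (\<bar>s\<bar> powr p * M powr (1 - p))))"
  using M
proof (induction K)
  case 0
  show ?case using finite_atomic_zero by (rule finite_atomic_weaken) simp_all
next
  case (Suc K)
  let ?Q = "8 * 6 powr (2 * lam)"
  have Q: "?Q \<ge> 1" using lam ge_one_powr_ge_zero[of 6 "2 * lam"] by simp
  have radii: "r * 2 ^ K > 0" "r * 2 ^ Suc K > 0" using pos by simp_all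
  have sub: "Iint z (r * 2 ^ K) \<subseteq> Iint z (r * 2 ^ Suc K)"
    by (rule Iint_subset) (use pos in auto)
  have "measure (mlam lam) (Iint z (r * 2 ^ K)) \<le> M"
    using measure_mlam_Iint_mono[OF lam pos(1) radii(2) sub] Suc.prems by linarith
  then have chain: "finite_atomic lam p (\<lambda>x. s * (unit_bump lam z r x - unit_bump lam z (r * 2 ^ K) x))
      (real K * (2 * ?Q * (\<bar>s\<bar> powr p * M powr (1 - p))))"
    by (rule Suc.IH)
  have step: "finite_atomic lam p
      (\<lambda>x. s * (unit_bump lam z (r * 2 ^ K) x - unit_bump lam z (r * 2 ^ Suc K) x))
      (2 * ?Q * (\<bar>s\<bar> powr p * M powr (1 - p)))"
  proof (rule finite_atomic_transport[OF lam p Q pos(1) radii(1) pos(1) radii(2) pos(1) radii(2) sub])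
    show "measure (mlam lam) (Iint z (r * 2 ^ Suc K)) \<le> ?Q * measure (mlam lam) (Iint z (r * 2 ^ K))"
      using lam pos radii by (intro measure_mlam_Iint_doubling) auto
    show "measure (mlam lam) (Iint z (r * 2 ^ Suc K)) \<le> ?Q * measure (mlam lam) (Iint z (r * 2 ^ Suc K))"
      using Q measure_mlam_Iint_pos[OF lam pos(1) radii(2)] by simp
  qed (use Suc.prems in simp_all)
  from finite_atomic_add[OF chain step] show ?case
    by (rule finite_atomic_weaken) (simp_all add: algebra_simps)
qed

lemma finite_atomic_bump_difference:
  assumes lam: "0 \<le> lam" and p: "0 < p" "p \<le> 1" and pos: "x1 > 0" "x2 > 0" "r > 0"
    and sep: "x1 < x2" "x2 - x1 \<le> r * 2 ^ K"
  shows "finite_atomic lam p (\<lambda>x. s * (unit_bump lam x1 r x - unit_bump lam x2 r x))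
    ((2 * real K + 1) * (2 * (8 * 6 powr (2 * lam))
      * (\<bar>s\<bar> powr p * measure (mlam lam) (Iint x1 (r * 2 ^ Suc K)) powr (1 - p))))"
proof -
  define Q where "Q = 8 * 6 powr (2 * lam)"
  define R where "R = r * 2 ^ K"
  define M where "M = measure (mlam lam) (Iint x1 (2 * R))"
  define E where "E = 2 * Q * (\<bar>s\<bar> powr p * M powr (1 - p))"
  have Q: "Q \<ge> 1" unfolding Q_def using lam ge_one_powr_ge_zero[of 6 "2 * lam"] by simp
  have R: "R > 0" "2 * R > 0" unfolding R_def using pos by simp_all
  have sub: "Iint x1 R \<subseteq> Iint x1 (2 * R)" "Iint x2 R \<subseteq> Iint x1 (2 * R)"
    by (rule Iint_subset; use sep R in \<open>simp add: R_def\<close>)+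
  have chain1: "finite_atomic lam p (\<lambda>x. s * (unit_bump lam x1 r x - unit_bump lam x1 R x)) (real K * E)"
    unfolding E_def Q_def R_def using measure_mlam_Iint_mono[OF lam pos(1) R(2) sub(1)]
    by (intro finite_atomic_dyadic_chain[OF lam p pos(1,3)]) (simp add: M_def R_def)
  have chain2: "finite_atomic lam p (\<lambda>x. (- s) * (unit_bump lam x2 r x - unit_bump lam x2 R x)) (real K * E)"
    unfolding E_def Q_def R_def using measure_mlam_Iint_mono[OF lam pos(1) R(2) sub(2)]
    using finite_atomic_dyadic_chain[OF lam p pos(2,3), of K M "- s"] by (simp add: M_def R_def)
  have bridge: "finite_atomic lam p (\<lambda>x. s * (unit_bump lam x1 R x - unit_bump lam x2 R x)) E"
    unfolding E_def
  proof (rule finite_atomic_transport[OF lam p Q pos(1) R(1) pos(2) R(1) pos(1) R(2) sub])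
    show "measure (mlam lam) (Iint x1 (2 * R)) \<le> Q * measure (mlam lam) (Iint x1 R)"
      "measure (mlam lam) (Iint x1 (2 * R)) \<le> Q * measure (mlam lam) (Iint x2 R)"
      unfolding Q_def using lam pos R sep by (auto intro!: measure_mlam_Iint_doubling)
  qed (simp add: M_def)
  have E_eq: "E = 2 * (8 * 6 powr (2 * lam))
      * (\<bar>s\<bar> powr p * measure (mlam lam) (Iint x1 (r * 2 ^ Suc K)) powr (1 - p))"
    unfolding E_def Q_def M_def R_def by (simp add: ac_simps)
  show ?thesis
    unfolding E_eq[symmetric]
    using finite_atomic_add[OF finite_atomic_add[OF chain1 chain2] bridge]
    by (rule finite_atomic_weaken) (simp_all add: algebra_simps)
qed

lemma two_bumps_split:
  fixes f :: "real \<Rightarrow> real"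
  assumes bound: "\<forall>x>0. \<bar>f x\<bar> \<le> C1 * indicator A x + C2 * indicator B x"
    and disjoint: "A \<inter> B = {}" and pos: "A \<subseteq> {0<..}" "B \<subseteq> {0<..}"
  shows "\<bar>f x * indicator A x\<bar> \<le> C1 * indicator A x" "\<bar>f x * indicator B x\<bar> \<le> C2 * indicator B x"
    and "x > 0 \<Longrightarrow> f x = f x * indicator A x + f x * indicator B x"
proof -
  have on_A: "\<bar>f y\<bar> \<le> C1" if "y \<in> A" for y
  proof -
    have "y > 0" "y \<notin> B" using that disjoint pos by auto
    with that show ?thesis using bound by auto
  qed
  have on_B: "\<bar>f y\<bar> \<le> C2" if "y \<in> B" for y
  proof -
    have "y > 0" "y \<notin> A" using that disjoint pos by auto
    with that show ?thesis using bound by auto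
  qed
  show "\<bar>f x * indicator A x\<bar> \<le> C1 * indicator A x" "\<bar>f x * indicator B x\<bar> \<le> C2 * indicator B x"
    using on_A on_B by (auto simp: indicator_def)
  show "f x = f x * indicator A x + f x * indicator B x" if "x > 0"
    using bound that disjoint by (auto simp: indicator_def)
qed

lemma mean_zero_split_two_bumps:
  fixes f :: "real \<Rightarrow> real"
  assumes lam: "0 \<le> lam" and f: "f \<in> borel_measurable borel" and mean_zero: "integral\<^sup>L (mlam lam) f = 0"
    and pos: "x1 > 0" "x2 > 0" "r > 0"
    and bound: "\<forall>x>0. \<bar>f x\<bar> \<le> C1 * indicator (Iint x1 r) x + C2 * indicator (Iint x2 r) x"
    and disjoint: "Iint x1 r \<inter> Iint x2 r = {}"
  obtains f1 f2 where "f1 \<in> borel_measurable borel" "f2 \<in> borel_measurable borel"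
    "\<And>x. \<bar>f1 x\<bar> \<le> C1 * indicator (Iint x1 r) x" "\<And>x. \<bar>f2 x\<bar> \<le> C2 * indicator (Iint x2 r) x"
    "\<And>x. x > 0 \<Longrightarrow> f x = f1 x + f2 x" "integral\<^sup>L (mlam lam) f2 = - integral\<^sup>L (mlam lam) f1"
proof -
  define f1 where "f1 x = f x * indicator (Iint x1 r) x" for x
  define f2 where "f2 x = f x * indicator (Iint x2 r) x" for x
  note split = two_bumps_split[OF bound disjoint Iint_subset_pos Iint_subset_pos, folded f1_def f2_def]
  have meas: "f1 \<in> borel_measurable borel" "f2 \<in> borel_measurable borel"
    unfolding f1_def f2_def using f by measurable
  have "AE x in mlam lam. f x = f1 x + f2 x"
    using AE_mlam_pos by eventually_elim (rule split(3))
  then have "integral\<^sup>L (mlam lam) f = integral\<^sup>L (mlam lam) (\<lambda>x. f1 x + f2 x)"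
    using f meas by (intro integral_cong_AE) (simp_all add: measurable_mlam_iff)
  also have "\<dots> = integral\<^sup>L (mlam lam) f1 + integral\<^sup>L (mlam lam) f2"
    using integrable_abs_integral_mlam_Iint_le(1)[OF lam pos(1,3) meas(1) split(1)]
      integrable_abs_integral_mlam_Iint_le(1)[OF lam pos(2,3) meas(2) split(2)] by simp
  finally have "integral\<^sup>L (mlam lam) f2 = - integral\<^sup>L (mlam lam) f1"
    using mean_zero by simp
  with meas split show ?thesis by (rule that)
qed

lemma transport_mass_le:
  fixes s C m M Q t p :: real
  assumes p: "0 < p" "p \<le> 1" and "\<bar>s\<bar> \<le> C * m" "0 \<le> C" "0 < m" "0 < M" "M \<le> Q * t * m" "1 \<le> Q" "0 < t"
  shows "\<bar>s\<bar> powr p * M powr (1 - p) \<le> Q * t powr (1 - p) * (C powr p * m)"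
proof -
  have "\<bar>s\<bar> powr p * M powr (1 - p) \<le> (C * m) powr p * (Q * t * m) powr (1 - p)"
    using assms by (intro mult_mono powr_mono2) auto
  also have "\<dots> = Q powr (1 - p) * t powr (1 - p) * (C powr p * (m powr p * m powr (1 - p)))"
    using assms by (simp add: powr_mult)
  also have "m powr p * m powr (1 - p) = m"
    using assms by (simp flip: powr_add)
  also have "Q powr (1 - p) \<le> Q"
    using assms powr_mono[of "1 - p" 1 Q] by simp
  then have "Q powr (1 - p) * t powr (1 - p) * (C powr p * m) \<le> Q * t powr (1 - p) * (C powr p * m)"
    using assms by (intro mult_right_mono) auto
  finally show ?thesis .
qed

lemma transport_cost_far:
  assumes lam: "0 \<le> lam" and p: "0 < p" "p \<le> 1" and pos: "x1 > 0" "x2 > 0" "r > 0"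
    and sep: "x1 < x2" "r * 2 ^ K \<le> 2 * (x2 - x1)"
    and s: "\<bar>s\<bar> \<le> C * measure (mlam lam) (Iint x2 r)" and C: "0 \<le> C"
  shows "\<bar>s\<bar> powr p * measure (mlam lam) (Iint x1 (r * 2 ^ Suc K)) powr (1 - p)
    \<le> 16 * 10 powr (2 * lam) * ((x2 - x1) / r) powr (1 - p) * (C powr p * measure (mlam lam) (Iint x2 r))"
proof (rule transport_mass_le[OF p s C])
  show "measure (mlam lam) (Iint x1 (r * 2 ^ Suc K))
      \<le> 16 * 10 powr (2 * lam) * ((x2 - x1) / r) * measure (mlam lam) (Iint x2 r)"
    using lam pos sep by (intro measure_mlam_Iint_far) auto
  show "1 \<le> 16 * 10 powr (2 * lam)"
    using lam ge_one_powr_ge_zero[of 10 "2 * lam"] by simp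
qed (use lam pos sep in \<open>simp_all add: measure_mlam_Iint_pos\<close>)

lemma finite_atomic_two_bumps_at_scale:
  fixes f :: "real \<Rightarrow> real"
  assumes lam: "0 \<le> lam" and p: "0 < p" "p \<le> 1"
    and f: "f \<in> borel_measurable borel" and mean_zero: "integral\<^sup>L (mlam lam) f = 0"
    and pos: "x1 > 0" "x2 > 0" "r > 0" and C: "0 \<le> C1" "0 \<le> C2"
    and bound: "\<forall>x>0. \<bar>f x\<bar> \<le> C1 * indicator (Iint x1 r) x + C2 * indicator (Iint x2 r) x"
    and sep: "x1 < x2" "2 * r \<le> x2 - x1"
    and scale: "x2 - x1 \<le> r * 2 ^ K" "r * 2 ^ K \<le> 2 * (x2 - x1)"
  shows "finite_atomic lam p f
    ((2 + (2 * real K + 1) * (2 * (8 * 6 powr (2 * lam)) * (16 * 10 powr (2 * lam))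
        * ((x2 - x1) / r) powr (1 - p)))
      * (C1 powr p * measure (mlam lam) (Iint x1 r) + C2 powr p * measure (mlam lam) (Iint x2 r)))"
proof -
  define Qd where "Qd = 8 * 6 powr (2 * lam)"
  define Qf where "Qf = 16 * 10 powr (2 * lam)"
  define t where "t = (x2 - x1) / r"
  define m1 where "m1 = measure (mlam lam) (Iint x1 r)"
  define m2 where "m2 = measure (mlam lam) (Iint x2 r)"
  define S where "S = C1 powr p * m1 + C2 powr p * m2"
  define M where "M = measure (mlam lam) (Iint x1 (r * 2 ^ Suc K))"
  have "Iint x1 r \<inter> Iint x2 r = {}" using sep unfolding Iint_def by auto
  then obtain f1 f2 where meas: "f1 \<in> borel_measurable borel" "f2 \<in> borel_measurable borel"
    and bounds: "\<And>x. \<bar>f1 x\<bar> \<le> C1 * indicator (Iint x1 r) x" "\<And>x. \<bar>f2 x\<bar> \<le> C2 * indicator (Iint x2 r) x"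
    and f_eq: "\<And>x. x > 0 \<Longrightarrow> f x = f1 x + f2 x"
    and f2_mean: "integral\<^sup>L (mlam lam) f2 = - integral\<^sup>L (mlam lam) f1"
    using mean_zero_split_two_bumps[OF lam f mean_zero pos bound] by blast
  define s where "s = integral\<^sup>L (mlam lam) f1"
  have "\<bar>s\<bar> \<le> C2 * measure (mlam lam) (Iint x2 r)"
    using integrable_abs_integral_mlam_Iint_le(2)[OF lam pos(2,3) meas(2) bounds(2)] f2_mean
    by (simp add: s_def)
  with lam p pos sep(1) scale(2) have "\<bar>s\<bar> powr p * M powr (1 - p) \<le> Qf * t powr (1 - p) * (C2 powr p * m2)"
    unfolding M_def Qf_def t_def m2_def using C(2) by (rule transport_cost_far)
  also have "\<dots> \<le> Qf * t powr (1 - p) * S"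
    unfolding S_def m1_def Qf_def by (intro mult_left_mono) auto
  finally have "(2 * real K + 1) * (2 * Qd * (\<bar>s\<bar> powr p * M powr (1 - p)))
      \<le> (2 * real K + 1) * (2 * Qd * (Qf * t powr (1 - p) * S))"
    unfolding Qd_def by (intro mult_left_mono) auto
  moreover have "(2 + (2 * real K + 1) * (2 * Qd * Qf * t powr (1 - p))) * S
      = 2 * (C1 powr p * m1) + 2 * (C2 powr p * m2) + (2 * real K + 1) * (2 * Qd * (Qf * t powr (1 - p) * S))"
    unfolding S_def by (simp add: algebra_simps)
  ultimately have cost: "2 * (C1 powr p * m1) + 2 * (C2 powr p * m2)
      + (2 * real K + 1) * (2 * Qd * (\<bar>s\<bar> powr p * M powr (1 - p)))
      \<le> (2 + (2 * real K + 1) * (2 * Qd * Qf * t powr (1 - p))) * S"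
    by linarith
  have piece1: "finite_atomic lam p (\<lambda>x. f1 x - s * unit_bump lam x1 r x) (2 * (C1 powr p * m1))"
    using finite_atomic_subtract_mean[OF lam p pos(1,3) meas(1) bounds(1)] unfolding s_def m1_def .
  have piece2: "finite_atomic lam p (\<lambda>x. f2 x - (- s) * unit_bump lam x2 r x) (2 * (C2 powr p * m2))"
    using finite_atomic_subtract_mean[OF lam p pos(2,3) meas(2) bounds(2)] unfolding f2_mean s_def m2_def .
  have transport: "finite_atomic lam p (\<lambda>x. s * (unit_bump lam x1 r x - unit_bump lam x2 r x))
      ((2 * real K + 1) * (2 * Qd * (\<bar>s\<bar> powr p * M powr (1 - p))))"
    unfolding Qd_def M_def using lam p pos sep(1) scale(1) by (rule finite_atomic_bump_difference)
  show ?thesis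
    unfolding Qd_def[symmetric] Qf_def[symmetric] t_def[symmetric] m1_def[symmetric] m2_def[symmetric]
      S_def[symmetric]
    using finite_atomic_add[OF finite_atomic_add[OF piece1 piece2] transport] cost
    by (rule finite_atomic_weaken) (simp add: f_eq algebra_simps)
qed

lemma dyadic_scale:
  fixes t :: real
  assumes "1 \<le> t"
  obtains K :: nat where "t \<le> 2 ^ K" "2 ^ K \<le> 2 * t" "real K < log 2 t + 1"
proof
  define K where "K = nat \<lceil>log 2 t\<rceil>"
  have "real K = of_int \<lceil>log 2 t\<rceil>"
    using assms unfolding K_def by simp
  with ceiling_correct[of "log 2 t"] have K: "log 2 t \<le> real K" "real K < log 2 t + 1"
    by linarith+
  have "t = 2 powr log 2 t" using assms by simp
  also have "\<dots> \<le> 2 ^ K" using K by (simp add: powr_realpow[symmetric])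
  finally show "t \<le> 2 ^ K" .
  have "(2::real) ^ K = 2 powr real K" by (simp add: powr_realpow)
  also have "\<dots> \<le> 2 powr (log 2 t + 1)" using K by simp
  also have "\<dots> = 2 * t" using assms by (simp add: powr_add)
  finally show "2 ^ K \<le> 2 * t" .
  show "real K < log 2 t + 1" by (fact K(2))
qed

lemma finite_atomic_two_bumps:
  fixes f :: "real \<Rightarrow> real"
  assumes lam: "0 \<le> lam" and p: "0 < p" "p \<le> 1"
    and f: "f \<in> borel_measurable borel" and mean_zero: "integral\<^sup>L (mlam lam) f = 0"
    and pos: "x1 > 0" "x2 > 0" "r > 0" and C: "0 \<le> C1" "0 \<le> C2"
    and bound: "\<forall>x>0. \<bar>f x\<bar> \<le> C1 * indicator (Iint x1 r) x + C2 * indicator (Iint x2 r) x"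
    and sep: "x1 < x2" "4 * r \<le> x2 - x1"
  shows "finite_atomic lam p f
    ((10 + 10 * (8 * 6 powr (2 * lam)) * (16 * 10 powr (2 * lam)))
      * ((x2 - x1) / r) powr (1 - p) * log 2 ((x2 - x1) / r)
      * (C1 powr p * measure (mlam lam) (Iint x1 r) + C2 powr p * measure (mlam lam) (Iint x2 r)))"
proof -
  define A where "A = 2 * (8 * 6 powr (2 * lam)) * (16 * 10 powr (2 * lam))"
  define t where "t = (x2 - x1) / r"
  define S where "S = C1 powr p * measure (mlam lam) (Iint x1 r) + C2 powr p * measure (mlam lam) (Iint x2 r)"
  have A: "A \<ge> 0" unfolding A_def by simp
  have S: "S \<ge> 0" unfolding S_def by simp
  have t: "4 \<le> t" unfolding t_def using sep pos by (simp add: field_simps)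
  have L: "2 \<le> log 2 t" using t by (simp add: le_log_iff powr_numeral)
  obtain K where K: "t \<le> 2 ^ K" "2 ^ K \<le> 2 * t" "real K < log 2 t + 1"
    using dyadic_scale[of t] t by force
  have tp: "1 \<le> t powr (1 - p)" using t p by (intro ge_one_powr_ge_zero) auto
  have scale: "x2 - x1 \<le> r * 2 ^ K" "r * 2 ^ K \<le> 2 * (x2 - x1)"
    using K(1,2) pos unfolding t_def by (simp_all add: field_simps)
  have "2 * r \<le> x2 - x1" using sep pos by simp
  from finite_atomic_two_bumps_at_scale[OF lam p f mean_zero pos C bound sep(1) this scale]
  have at_scale: "finite_atomic lam p f ((2 + (2 * real K + 1) * (A * t powr (1 - p))) * S)"
    unfolding A_def t_def S_def .
  have "2 + (2 * real K + 1) * (A * t powr (1 - p)) \<le> (2 * real K + 1) * 2 * t powr (1 - p) + (2 * real K + 1) * (A * t powr (1 - p))"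
    using mult_mono[of 1 "2 * real K + 1" 1 "t powr (1 - p)"] tp by linarith
  also have "\<dots> = (2 * real K + 1) * (2 + A) * t powr (1 - p)"
    by (simp add: algebra_simps)
  also have "\<dots> \<le> 5 * log 2 t * (2 + A) * t powr (1 - p)"
    using K L A tp by (intro mult_right_mono) auto
  finally have cost: "(2 + (2 * real K + 1) * (A * t powr (1 - p))) * S
      \<le> (10 + 5 * A) * t powr (1 - p) * log 2 t * S"
    using S by (intro mult_right_mono) (auto simp: algebra_simps)
  have constant_eq: "10 + 10 * (8 * 6 powr (2 * lam)) * (16 * 10 powr (2 * lam)) = 10 + 5 * A"
    unfolding A_def by simp
  show ?thesis
    unfolding constant_eq t_def[symmetric] S_def[symmetric]
    by (rule finite_atomic_weaken[OF at_scale cost]) simp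
qed

theorem lemma3p1:
  fixes lam p :: real
  assumes "lam > 0" and "(2 * lam + 1) / (2 * lam + 2) < p" and "p \<le> 1"
  shows "\<exists>C>0. \<forall>(f :: real \<Rightarrow> real) x1 x2 r C1 C2.
     f \<in> borel_measurable borel \<longrightarrow>
     integral\<^sup>L (mlam lam) f = 0 \<longrightarrow>
     x1 > 0 \<longrightarrow> x2 > 0 \<longrightarrow> r > 0 \<longrightarrow> C1 > 0 \<longrightarrow> C2 > 0 \<longrightarrow>
     (\<forall>x>0. \<bar>f x\<bar> \<le> C1 * indicator (Iint x1 r) x + C2 * indicator (Iint x2 r) x) \<longrightarrow>
     \<bar>x1 - x2\<bar> \<ge> 4 * r \<longrightarrow>
     in_Hp lam p f \<and>
     Hp_norm_p lam p f \<le> C * (\<bar>x1 - x2\<bar> / r) powr (1 - p) * log 2 (\<bar>x1 - x2\<bar> / r) *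
        (C1 powr p * measure (mlam lam) (Iint x1 r) + C2 powr p * measure (mlam lam) (Iint x2 r))"
proof -
  have lam: "0 \<le> lam" using assms(1) by simp
  have p: "0 < p" "p \<le> 1"
    using assms(2,3) order_le_less_trans[of 0 "(2 * lam + 1) / (2 * lam + 2)" p] lam by simp_all
  define C where "C = 10 + 10 * (8 * 6 powr (2 * lam)) * (16 * 10 powr (2 * lam))"
  have "C > 0" unfolding C_def by (simp add: add_pos_nonneg)
  show ?thesis
  proof (intro exI[of _ C] conjI[OF \<open>C > 0\<close>] allI impI)
    fix f :: "real \<Rightarrow> real" and x1 x2 r C1 C2 :: real
    assume f: "f \<in> borel_measurable borel" "integral\<^sup>L (mlam lam) f = 0"
      and pos: "x1 > 0" "x2 > 0" "r > 0" "C1 > 0" "C2 > 0"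
      and bound: "\<forall>x>0. \<bar>f x\<bar> \<le> C1 * indicator (Iint x1 r) x + C2 * indicator (Iint x2 r) x"
      and sep: "\<bar>x1 - x2\<bar> \<ge> 4 * r"
    consider "x1 < x2" | "x2 < x1" using sep pos by linarith
    then show "in_Hp lam p f \<and> Hp_norm_p lam p f \<le> C * (\<bar>x1 - x2\<bar> / r) powr (1 - p)
        * log 2 (\<bar>x1 - x2\<bar> / r)
        * (C1 powr p * measure (mlam lam) (Iint x1 r) + C2 powr p * measure (mlam lam) (Iint x2 r))"
    proof cases
      case 1
      with sep finite_atomic_two_bumps[OF lam p f pos(1-3) less_imp_le[OF pos(4)] less_imp_le[OF pos(5)] bound]
      show ?thesis by (simp add: C_def in_Hp_if_finite_atomic)
    next
      case 2
      from bound have "\<forall>x>0. \<bar>f x\<bar> \<le> C2 * indicator (Iint x2 r) x + C1 * indicator (Iint x1 r) x"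
        by (simp add: add.commute)
      with 2 sep finite_atomic_two_bumps[OF lam p f pos(2,1,3) less_imp_le[OF pos(5)] less_imp_le[OF pos(4)]]
      show ?thesis by (simp add: C_def in_Hp_if_finite_atomic add.commute)
    qed
  qed
qed

end
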